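(* Let $\mathbb{S}$ be a metric space with its Borel $\sigma$-field, let $\{\mu_n\}_{n=1,2,\ldots}$ be a sequence of measures on $\mathbb{S}$ converging weakly to a finite measure $\mu$ on $\mathbb{S}$, and let $\{f_n,g_n\}_{n=1,2,\ldots}$ be measurable $[-\infty,+\infty]$-valued functions on $\mathbb{S}$ such that $f_n(s)\ge g_n(s)$ for all $n$ and $s\in\mathbb{S}$, and $$-\infty<\int_{\mathbb{S}}\limsup_{n\to\infty,\,s'\to s} g_n(s')\,\mu(ds)\le\liminf_{n\to\infty}\int_{\mathbb{S}} g_n(s)\,\mu_n(ds).$$ Then $$\int_{\mathbb{S}}\liminf_{n\to\infty,\,s'\to s} f_n(s')\,\mu(ds)\le\liminf_{n\to\infty}\int_{\mathbb{S}} f_n(s)\,\mu_n(ds).$$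
   Context: Weak convergence: $\int f\,d\mu_n\to\int f\,d\mu$ for all bounded continuous $f$. Integrals of extended-real functions are $\int f^+-\int f^-$, defined when one of these is finite; all integrals in the hypotheses are assumed defined. $\liminf_{n\to\infty,s'\to s}f_n(s'):=\sup_{n\ge1,\delta>0}\inf_{m\ge n,\,s'\in B_\delta(s)}f_m(s')$ and $\limsup_{n\to\infty,s'\to s}g_n(s'):=\inf_{n\ge1,\delta>0}\sup_{m\ge n,\,s'\in B_\delta(s)}g_m(s')$, with $B_\delta(s)$ the ball of radius $\delta$ about $s$. *)

theory Defs
  imports "HOL-Analysis.Analysis"
begin

definition pos_int :: "'a measure \<Rightarrow> ('a \<Rightarrow> ereal) \<Rightarrow> ennreal" where
  "pos_int M f = (\<integral>\<^sup>+ x. e2ennreal (max 0 (f x)) \<partial>M)"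

definition neg_int :: "'a measure \<Rightarrow> ('a \<Rightarrow> ereal) \<Rightarrow> ennreal" where
  "neg_int M f = (\<integral>\<^sup>+ x. e2ennreal (max 0 (- f x)) \<partial>M)"

definition eint_defined :: "'a measure \<Rightarrow> ('a \<Rightarrow> ereal) \<Rightarrow> bool" where
  "eint_defined M f \<longleftrightarrow> pos_int M f < \<infinity> \<or> neg_int M f < \<infinity>"

definition eint :: "'a measure \<Rightarrow> ('a \<Rightarrow> ereal) \<Rightarrow> ereal" where
  "eint M f = enn2ereal (pos_int M f) - enn2ereal (neg_int M f)"

definition weak_conv :: "(nat \<Rightarrow> 'a::metric_space measure) \<Rightarrow> 'a measure \<Rightarrow> bool" where
  "weak_conv Mn M \<longleftrightarrow> (\<forall>f::'a \<Rightarrow> real. continuous_on UNIV f \<and> bounded (range f) \<longrightarrow>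
      (\<lambda>n. eint (Mn n) (\<lambda>x. ereal (f x))) \<longlonglongrightarrow> eint M (\<lambda>x. ereal (f x)))"

definition joint_liminf :: "(nat \<Rightarrow> 'a::metric_space \<Rightarrow> ereal) \<Rightarrow> 'a \<Rightarrow> ereal" where
  "joint_liminf f s = (SUP n\<in>{1..}. SUP \<delta>\<in>{(0::real)<..}. INF m\<in>{n..}. INF s'\<in>ball s \<delta>. f m s')"

definition joint_limsup :: "(nat \<Rightarrow> 'a::metric_space \<Rightarrow> ereal) \<Rightarrow> 'a \<Rightarrow> ereal" where
  "joint_limsup g s = (INF n\<in>{1..}. INF \<delta>\<in>{(0::real)<..}. SUP m\<in>{n..}. SUP s'\<in>ball s \<delta>. g m s')"

end

theory Submission
  imports Defs
begin

text \<open>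
  Write \<open>f\<^sub>n = u\<^sub>n + g\<^sub>n\<close> with \<open>u\<^sub>n = f\<^sub>n - g\<^sub>n \<ge> 0\<close>. Pointwise, the joint liminf of \<open>f\<^sub>n\<close> is at most
  the joint liminf of \<open>u\<^sub>n\<close> plus the joint limsup of \<open>g\<^sub>n\<close>, so by the hypothesis on \<open>g\<^sub>n\<close> it
  suffices to prove the Fatou-type inequality \<open>\<integral> liminf u\<^sub>n d\<mu> \<le> liminf \<integral> u\<^sub>n d\<mu>\<^sub>n\<close> for
  nonnegative \<open>u\<^sub>n\<close>. For it, the joint liminf of \<open>u\<^sub>n\<close> is approximated from below by the
  bounded \<open>K\<close>-Lipschitz envelopes \<open>\<psi>\<^sub>K\<close> of \<open>min K (inf {u\<^sub>m | m \<ge> K})\<close>; since \<open>\<psi>\<^sub>K \<le> u\<^sub>n\<close> for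
  \<open>n \<ge> K\<close>, weak convergence gives \<open>\<integral> \<psi>\<^sub>K d\<mu> \<le> liminf \<integral> u\<^sub>n d\<mu>\<^sub>n\<close>, and the ordinary Fatou
  lemma in \<open>K\<close> concludes.
\<close>

lemma eint_mono_AE:
  assumes "AE x in M. f x \<le> g x"
  shows "eint M f \<le> eint M g"
proof -
  have "pos_int M f \<le> pos_int M g" unfolding pos_int_def
    using assms by (intro nn_integral_mono_AE) (auto elim!: eventually_mono intro!: e2ennreal_mono max.mono)
  moreover have "neg_int M g \<le> neg_int M f" unfolding neg_int_def
    using assms by (intro nn_integral_mono_AE) (auto elim!: eventually_mono intro!: e2ennreal_mono max.mono)
  ultimately show ?thesis unfolding eint_def
    by (intro ereal_minus_mono) (auto simp: less_eq_ennreal.rep_eq[symmetric])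
qed

lemma eint_cong_AE: "AE x in M. f x = g x \<Longrightarrow> eint M f = eint M g"
  by (intro antisym eint_mono_AE) (auto elim: eventually_mono)

lemma eint_nonneg:
  assumes "\<And>x. 0 \<le> f x"
  shows "eint M f = enn2ereal (\<integral>\<^sup>+ x. e2ennreal (f x) \<partial>M)"
proof -
  have "neg_int M f = 0" unfolding neg_int_def
    using assms by (simp add: max_def e2ennreal_neg)
  moreover have "pos_int M f = (\<integral>\<^sup>+ x. e2ennreal (f x) \<partial>M)" unfolding pos_int_def
    using assms by (simp add: max_def)
  ultimately show ?thesis unfolding eint_def by (simp add: zero_ennreal.rep_eq)
qed

lemma neg_int_less_top:
  assumes "eint_defined M h" "- \<infinity> < eint M h"
  shows "neg_int M h < \<infinity>"
  using assms unfolding eint_defined_def eint_def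
  by (cases "pos_int M h"; cases "neg_int M h") (auto simp: top_unique)

lemma AE_neq_MInf_if_neg_int_less_top:
  assumes "g \<in> borel_measurable M" "neg_int M g < \<infinity>"
  shows "AE x in M. g x \<noteq> -\<infinity>"
proof -
  have "AE x in M. e2ennreal (max 0 (- g x)) \<noteq> \<infinity>"
    using assms unfolding neg_int_def by (intro nn_integral_PInf_AE) auto
  then show ?thesis by (rule eventually_mono) auto
qed

lemma e2ennreal_max_0_ereal: "e2ennreal (max 0 (ereal x)) = ennreal x"
  by (cases "x \<le> 0") (auto simp: max_def ennreal_neg zero_ereal_def)

lemma e2ennreal_parts_add:
  fixes a b :: ereal
  assumes "0 \<le> a" "b \<noteq> -\<infinity>"
  shows "e2ennreal (max 0 (a + b)) + e2ennreal (max 0 (- b)) =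
         e2ennreal a + e2ennreal (max 0 b) + e2ennreal (max 0 (- (a + b)))"
proof (cases "a = \<infinity> \<or> b = \<infinity>")
  case False
  then obtain x y where xy: "a = ereal x" "b = ereal y" "0 \<le> x"
    using assms by (cases a; cases b) auto
  have "ennreal (x + y) + ennreal (- y) = ennreal x + ennreal y + ennreal (- (x + y))"
    using \<open>0 \<le> x\<close>
    by (cases "0 \<le> y"; cases "0 \<le> x + y")
       (auto simp: ennreal_neg ennreal_plus[symmetric] simp del: ennreal_plus)
  then show ?thesis
    using xy e2ennreal_max_0_ereal[of x] by (simp add: e2ennreal_max_0_ereal)
qed (use assms in auto)

lemma eint_add:
  fixes u g :: "'a \<Rightarrow> ereal"
  assumes u_nonneg: "\<And>x. 0 \<le> u x" and u_meas: "u \<in> borel_measurable M"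
    and g_meas: "g \<in> borel_measurable M" and g_neg: "neg_int M g < \<infinity>"
  shows "eint M (\<lambda>x. u x + g x) = eint M u + eint M g"
proof -
  define N where "N = (\<integral>\<^sup>+ x. e2ennreal (max 0 (- (u x + g x))) \<partial>M)"
  have "pos_int M (\<lambda>x. u x + g x) + neg_int M g =
      (\<integral>\<^sup>+ x. e2ennreal (max 0 (u x + g x)) + e2ennreal (max 0 (- g x)) \<partial>M)"
    unfolding pos_int_def neg_int_def using u_meas g_meas by (intro nn_integral_add[symmetric]) auto
  also have "\<dots> = (\<integral>\<^sup>+ x. e2ennreal (u x) + e2ennreal (max 0 (g x)) +
      e2ennreal (max 0 (- (u x + g x))) \<partial>M)"
    using AE_neq_MInf_if_neg_int_less_top[OF g_meas g_neg]
    by (intro nn_integral_cong_AE) (auto elim!: eventually_mono simp: e2ennreal_parts_add u_nonneg)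
  also have "\<dots> = (\<integral>\<^sup>+ x. e2ennreal (u x) \<partial>M) + pos_int M g + N"
    unfolding pos_int_def N_def using u_meas g_meas by (simp add: nn_integral_add)
  finally have parts: "pos_int M (\<lambda>x. u x + g x) + neg_int M g =
      (\<integral>\<^sup>+ x. e2ennreal (u x) \<partial>M) + pos_int M g + N" .
  have "N \<le> neg_int M g"
    unfolding N_def neg_int_def using u_nonneg
    by (intro nn_integral_mono e2ennreal_mono max.mono) (auto simp: add_increasing)
  then have "N < \<infinity>" using g_neg by simp
  have "enn2ereal (pos_int M (\<lambda>x. u x + g x)) - enn2ereal N =
      enn2ereal (\<integral>\<^sup>+ x. e2ennreal (u x) \<partial>M) + (enn2ereal (pos_int M g) - enn2ereal (neg_int M g))"
    using parts g_neg \<open>N < \<infinity>\<close>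
    by (cases "pos_int M (\<lambda>x. u x + g x)"; cases "neg_int M g"; cases N; cases "pos_int M g";
        cases "\<integral>\<^sup>+ x. e2ennreal (u x) \<partial>M")
       (auto simp: ennreal_plus[symmetric] simp del: ennreal_plus)
  then show ?thesis
    unfolding eint_nonneg[OF u_nonneg] by (simp add: eint_def neg_int_def N_def)
qed

lemma eint_diff_add:
  fixes f g :: "'a \<Rightarrow> ereal"
  assumes "\<And>x. g x \<le> f x" "f \<in> borel_measurable M" "g \<in> borel_measurable M" "neg_int M g < \<infinity>"
  shows "eint M (\<lambda>x. f x - g x) + eint M g = eint M f"
proof -
  have "eint M (\<lambda>x. f x - g x) + eint M g = eint M (\<lambda>x. (f x - g x) + g x)"
    using assms by (intro eint_add[symmetric]) (auto simp: ereal_diff_positive)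
  also have "\<dots> = eint M f"
  proof (intro eint_cong_AE eventually_mono[OF AE_neq_MInf_if_neg_int_less_top[OF assms(3,4)]])
    fix x assume "g x \<noteq> - \<infinity>"
    then show "f x - g x + g x = f x" using assms(1)[of x] by (cases "f x"; cases "g x") auto
  qed
  finally show ?thesis .
qed

lemma open_joint_liminf_greater: "open {s. t < joint_liminf f s}"
proof (rule openI)
  fix s assume "s \<in> {s. t < joint_liminf f s}"
  then obtain n \<delta> where n: "n \<ge> 1" "\<delta> > 0" and lt: "t < (INF m\<in>{n..}. INF s'\<in>ball s \<delta>. f m s')"
    unfolding joint_liminf_def by (auto simp: less_SUP_iff)
  have "ball s (\<delta>/2) \<subseteq> {s. t < joint_liminf f s}"
  proof
    fix x assume x: "x \<in> ball s (\<delta>/2)"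
    have "ball x (\<delta>/2) \<subseteq> ball s \<delta>"
      using x by metric
    then have "(INF m\<in>{n..}. INF s'\<in>ball s \<delta>. f m s') \<le> (INF m\<in>{n..}. INF s'\<in>ball x (\<delta>/2). f m s')"
      by (intro INF_mono) (auto intro!: INF_superset_mono)
    also have "\<dots> \<le> joint_liminf f x" unfolding joint_liminf_def
      using n by (intro SUP_upper2[of n] SUP_upper2[of "\<delta>/2"]) auto
    finally show "x \<in> {s. t < joint_liminf f s}" using lt by auto
  qed
  then show "\<exists>e>0. ball s e \<subseteq> {s. t < joint_liminf f s}" using n by (intro exI[of _ "\<delta>/2"]) auto
qed

lemma borel_measurable_joint_liminf: "joint_liminf f \<in> borel_measurable borel"
  by (rule borel_measurableI_greater) (simp add: open_joint_liminf_greater)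

lemma joint_limsup_eq_uminus_joint_liminf: "joint_limsup g s = - joint_liminf (\<lambda>n s. - g n s) s"
  unfolding joint_limsup_def joint_liminf_def
  by (simp add: ereal_SUP_uminus_eq ereal_INF_uminus_eq)

lemma borel_measurable_joint_limsup: "joint_limsup g \<in> borel_measurable borel"
  unfolding joint_limsup_eq_uminus_joint_liminf[abs_def]
  by (simp add: borel_measurable_joint_liminf)

lemma joint_liminf_nonneg:
  assumes "\<And>n s. 0 \<le> u n s"
  shows "0 \<le> joint_liminf u s"
  unfolding joint_liminf_def
  by (intro SUP_upper2[of 1] SUP_upper2[of "1::real"]) (auto intro!: INF_greatest assms)

text \<open>The Pasch--Hausdorff envelope: the largest \<open>L\<close>-Lipschitz minorant of \<open>h\<close>.\<close>
definition pasch_hausdorff :: "real \<Rightarrow> ('a::metric_space \<Rightarrow> real) \<Rightarrow> 'a \<Rightarrow> real" where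
  "pasch_hausdorff L h s = (INF y. h y + L * dist s y)"

context
  fixes L :: real and h :: "'a::metric_space \<Rightarrow> real"
  assumes L_nonneg: "0 \<le> L" and h_nonneg: "\<And>y. 0 \<le> h y"
begin

lemma bdd_below_pasch_hausdorff: "bdd_below (range (\<lambda>y. h y + L * dist s y))"
  by (rule bdd_belowI[of _ 0]) (auto simp: h_nonneg L_nonneg)

lemma pasch_hausdorff_nonneg: "0 \<le> pasch_hausdorff L h s"
  unfolding pasch_hausdorff_def by (rule cINF_greatest) (auto simp: h_nonneg L_nonneg)

lemma pasch_hausdorff_le: "pasch_hausdorff L h s \<le> h s"
  unfolding pasch_hausdorff_def using cINF_lower[OF bdd_below_pasch_hausdorff[of s], of s] by simp

lemma lipschitz_on_pasch_hausdorff: "lipschitz_on L UNIV (pasch_hausdorff L h)"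
proof -
  have le: "pasch_hausdorff L h s \<le> pasch_hausdorff L h s' + L * dist s s'" for s s'
  proof -
    have "pasch_hausdorff L h s - L * dist s s' \<le> pasch_hausdorff L h s'"
      unfolding pasch_hausdorff_def
    proof (rule cINF_greatest)
      fix y
      have "(INF y. h y + L * dist s y) \<le> h y + L * dist s y"
        by (rule cINF_lower[OF bdd_below_pasch_hausdorff]) simp
      also have "\<dots> \<le> h y + L * dist s' y + L * dist s s'"
        using mult_left_mono[OF dist_triangle[of s y s'] L_nonneg] by (simp add: distrib_left)
      finally show "(INF y. h y + L * dist s y) - L * dist s s' \<le> h y + L * dist s' y"
        by simp
    qed simp
    then show ?thesis by simp
  qed
  show ?thesis
  proof (rule lipschitz_onI)
    fix s s' :: 'a
    show "dist (pasch_hausdorff L h s) (pasch_hausdorff L h s') \<le> L * dist s s'"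
      using le[of s s'] le[of s' s] by (simp add: dist_real_def dist_commute abs_le_iff)
  qed (rule L_nonneg)
qed

text \<open>Points outside the ball pay at least \<open>L * \<delta>\<close> in distance.\<close>
lemma pasch_hausdorff_ge:
  assumes "\<And>y. y \<in> ball s \<delta> \<Longrightarrow> t \<le> h y" and "t \<le> L * \<delta>"
  shows "t \<le> pasch_hausdorff L h s"
  unfolding pasch_hausdorff_def
proof (rule cINF_greatest)
  fix y
  show "t \<le> h y + L * dist s y"
  proof (cases "y \<in> ball s \<delta>")
    case True
    then show ?thesis using assms(1) L_nonneg by (simp add: add_increasing2)
  next
    case False
    then have "L * \<delta> \<le> L * dist s y" using L_nonneg by (simp add: mult_left_mono not_less)
    then show ?thesis using h_nonneg[of y] assms(2) by linarith
  qed
qed simp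

end

definition tail_trunc :: "nat \<Rightarrow> (nat \<Rightarrow> 'a \<Rightarrow> ereal) \<Rightarrow> 'a \<Rightarrow> real" where
  "tail_trunc K u y = real_of_ereal (min (ereal (real K)) (INF m\<in>{K..}. u m y))"

definition joint_liminf_approx :: "(nat \<Rightarrow> 'a::metric_space \<Rightarrow> ereal) \<Rightarrow> nat \<Rightarrow> 'a \<Rightarrow> real" where
  "joint_liminf_approx u K = pasch_hausdorff (real K) (tail_trunc K u)"

context
  fixes u :: "nat \<Rightarrow> 'a::metric_space \<Rightarrow> ereal"
  assumes u_nonneg: "\<And>n s. 0 \<le> u n s"
begin

lemma ereal_tail_trunc: "ereal (tail_trunc K u y) = min (ereal (real K)) (INF m\<in>{K..}. u m y)"
proof -
  have "0 \<le> min (ereal (real K)) (INF m\<in>{K..}. u m y)"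
    using u_nonneg by (auto intro: INF_greatest)
  moreover have "min (ereal (real K)) (INF m\<in>{K..}. u m y) \<le> ereal (real K)" by simp
  ultimately show ?thesis unfolding tail_trunc_def
    by (cases "min (ereal (real K)) (INF m\<in>{K..}. u m y)") auto
qed

lemma tail_trunc_nonneg: "0 \<le> tail_trunc K u y"
proof -
  have "0 \<le> ereal (tail_trunc K u y)"
    unfolding ereal_tail_trunc using u_nonneg by (auto intro: INF_greatest)
  then show ?thesis by simp
qed

lemma tail_trunc_le: "tail_trunc K u y \<le> real K"
  using ereal_tail_trunc[of K y] by (metis ereal_less_eq(3) min.cobounded1)

lemma joint_liminf_approx_nonneg: "0 \<le> joint_liminf_approx u K s"
  unfolding joint_liminf_approx_def
  by (rule pasch_hausdorff_nonneg[of "real K" "tail_trunc K u", OF of_nat_0_le_iff tail_trunc_nonneg])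

lemma joint_liminf_approx_le_tail_trunc: "joint_liminf_approx u K s \<le> tail_trunc K u s"
  unfolding joint_liminf_approx_def
  by (rule pasch_hausdorff_le[of "real K" "tail_trunc K u", OF of_nat_0_le_iff tail_trunc_nonneg])

lemma continuous_on_joint_liminf_approx: "continuous_on UNIV (joint_liminf_approx u K)"
  unfolding joint_liminf_approx_def
  by (rule lipschitz_on_continuous_on[OF
      lipschitz_on_pasch_hausdorff[of "real K" "tail_trunc K u", OF of_nat_0_le_iff tail_trunc_nonneg]])

lemma bounded_range_joint_liminf_approx: "bounded (range (joint_liminf_approx u K))"
proof (rule boundedI)
  fix x assume "x \<in> range (joint_liminf_approx u K)"
  then obtain s where "x = joint_liminf_approx u K s" by auto
  then show "norm x \<le> real K"
    using joint_liminf_approx_nonneg[of K s] joint_liminf_approx_le_tail_trunc[of K s]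
      tail_trunc_le[of K s]
    by simp
qed

lemma joint_liminf_approx_le:
  assumes "K \<le> n"
  shows "ereal (joint_liminf_approx u K s) \<le> u n s"
proof -
  have "ereal (joint_liminf_approx u K s) \<le> ereal (tail_trunc K u s)"
    using joint_liminf_approx_le_tail_trunc by simp
  also have "\<dots> \<le> (INF m\<in>{K..}. u m s)" by (simp add: ereal_tail_trunc)
  also have "\<dots> \<le> u n s" using assms by (auto intro: INF_lower)
  finally show ?thesis .
qed

lemma joint_liminf_le_liminf_approx:
  "e2ennreal (joint_liminf u s) \<le> liminf (\<lambda>K. ennreal (joint_liminf_approx u K s))"
  unfolding le_Liminf_iff
proof (intro allI impI)
  fix y assume y: "y < e2ennreal (joint_liminf u s)"
  then obtain r where r: "0 \<le> r" "y = ennreal r" by (cases y) (auto simp: top_unique)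
  have "ereal r < joint_liminf u s"
    using y r joint_liminf_nonneg[of u s, OF u_nonneg]
    by (simp add: less_ennreal.rep_eq enn2ereal_e2ennreal)
  then obtain t where t: "r < t" "ereal t < joint_liminf u s"
    using ereal_dense2 by (metis less_ereal.simps(1))
  then obtain n \<delta> where \<delta>: "0 < \<delta>" and n: "ereal t < (INF m\<in>{n..}. INF s'\<in>ball s \<delta>. u m s')"
    unfolding joint_liminf_def by (auto simp: less_SUP_iff)
  have "\<forall>\<^sub>F K in sequentially. max t (t / \<delta>) \<le> real K"
    using filterlim_real_sequentially unfolding filterlim_at_top by blast
  with eventually_ge_at_top[of n]
  have "\<forall>\<^sub>F K in sequentially. n \<le> K \<and> max t (t / \<delta>) \<le> real K"
    by (rule eventually_conj)
  then show "\<forall>\<^sub>F K in sequentially. y < ennreal (joint_liminf_approx u K s)"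
  proof (rule eventually_mono)
    fix K assume K: "n \<le> K \<and> max t (t / \<delta>) \<le> real K"
    have "t \<le> tail_trunc K u y'" if "y' \<in> ball s \<delta>" for y'
    proof -
      have "ereal t \<le> (INF m\<in>{K..}. u m y')"
      proof (rule INF_greatest)
        fix m assume "m \<in> {K..}"
        then have "(INF m\<in>{n..}. INF s'\<in>ball s \<delta>. u m s') \<le> u m y'"
          using K that by (intro INF_lower2[of m] INF_lower) auto
        then show "ereal t \<le> u m y'" using n by simp
      qed
      then have "ereal t \<le> ereal (tail_trunc K u y')" using K unfolding ereal_tail_trunc by simp
      then show ?thesis by simp
    qed
    moreover have "t \<le> real K * \<delta>" using K \<delta> by (simp add: pos_divide_le_eq mult.commute)
    ultimately have "t \<le> joint_liminf_approx u K s"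
      unfolding joint_liminf_approx_def
      by (rule pasch_hausdorff_ge[of "real K" "tail_trunc K u", OF of_nat_0_le_iff tail_trunc_nonneg])
    then show "y < ennreal (joint_liminf_approx u K s)" using r t(1) by (simp add: ennreal_less_iff)
  qed
qed

end

lemma eint_joint_liminf_le_liminf:
  fixes \<mu>n :: "nat \<Rightarrow> 'a::metric_space measure" and u :: "nat \<Rightarrow> 'a \<Rightarrow> ereal"
  assumes sets_\<mu>: "sets \<mu> = sets borel" and weak: "weak_conv \<mu>n \<mu>" and u_nonneg: "\<And>n s. 0 \<le> u n s"
  shows "eint \<mu> (joint_liminf u) \<le> liminf (\<lambda>n. eint (\<mu>n n) (u n))"
proof -
  define \<psi> where "\<psi> = joint_liminf_approx u"
  define L where "L = liminf (\<lambda>n. eint (\<mu>n n) (u n))"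
  have L_nonneg: "0 \<le> L"
    unfolding L_def
    by (intro Liminf_bounded always_eventually allI) (simp add: eint_nonneg u_nonneg)
  have \<psi>_nonneg: "0 \<le> \<psi> K s" for K s
    unfolding \<psi>_def by (rule joint_liminf_approx_nonneg[of u, OF u_nonneg])
  have eint_\<psi>: "eint M (\<lambda>x. ereal (\<psi> K x)) = enn2ereal (\<integral>\<^sup>+ x. ennreal (\<psi> K x) \<partial>M)" for M K
    using eint_nonneg[of "\<lambda>x. ereal (\<psi> K x)" M] \<psi>_nonneg by simp
  have int_\<psi>_le: "(\<integral>\<^sup>+ x. ennreal (\<psi> K x) \<partial>\<mu>) \<le> e2ennreal L" for K
  proof -
    have "(\<lambda>n. eint (\<mu>n n) (\<lambda>x. ereal (\<psi> K x))) \<longlonglongrightarrow> eint \<mu> (\<lambda>x. ereal (\<psi> K x))"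
      using weak unfolding weak_conv_def \<psi>_def
      by (simp add: continuous_on_joint_liminf_approx bounded_range_joint_liminf_approx u_nonneg)
    then have "eint \<mu> (\<lambda>x. ereal (\<psi> K x)) = liminf (\<lambda>n. eint (\<mu>n n) (\<lambda>x. ereal (\<psi> K x)))"
      by (simp add: lim_imp_Liminf)
    also have "\<dots> \<le> L" unfolding L_def \<psi>_def
      by (intro Liminf_mono eventually_mono[OF eventually_ge_at_top[of K]] eint_mono_AE AE_I2
          joint_liminf_approx_le[of u, OF u_nonneg])
    finally show ?thesis
      unfolding eint_\<psi> by (metis e2ennreal_enn2ereal e2ennreal_mono)
  qed
  have \<psi>_meas: "(\<lambda>x. ennreal (\<psi> K x)) \<in> borel_measurable \<mu>" for K
  proof -
    have "\<psi> K \<in> borel_measurable borel"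
      unfolding \<psi>_def
      by (intro borel_measurable_continuous_onI continuous_on_joint_liminf_approx u_nonneg)
    then show ?thesis by (simp add: measurable_cong_sets[OF sets_\<mu> refl])
  qed
  have "(\<integral>\<^sup>+ x. e2ennreal (joint_liminf u x) \<partial>\<mu>) \<le> (\<integral>\<^sup>+ x. liminf (\<lambda>K. ennreal (\<psi> K x)) \<partial>\<mu>)"
    unfolding \<psi>_def by (intro nn_integral_mono joint_liminf_le_liminf_approx[of u, OF u_nonneg])
  also have "\<dots> \<le> liminf (\<lambda>K. \<integral>\<^sup>+ x. ennreal (\<psi> K x) \<partial>\<mu>)"
    by (rule nn_integral_liminf[OF \<psi>_meas])
  also have "\<dots> \<le> liminf (\<lambda>_. e2ennreal L)"
    by (intro Liminf_mono always_eventually allI int_\<psi>_le)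
  also have "\<dots> = e2ennreal L" by (simp add: Liminf_const)
  finally have "enn2ereal (\<integral>\<^sup>+ x. e2ennreal (joint_liminf u x) \<partial>\<mu>) \<le> L"
    using L_nonneg by (metis enn2ereal_e2ennreal less_eq_ennreal.rep_eq)
  then show ?thesis
    using joint_liminf_nonneg[of u, OF u_nonneg] by (simp add: eint_nonneg L_def)
qed

lemma ereal_add_less_realE:
  fixes a b :: ereal
  assumes "a + b < ereal r"
  obtains r1 r2 where "a < ereal r1" "b < ereal r2" "r1 + r2 = r"
proof -
  have "\<exists>r1. a < ereal r1 \<and> b < ereal (r - r1)"
  proof (cases a; cases b)
    fix x y assume "a = ereal x" "b = ereal y"
    then show ?thesis
      using assms by (intro exI[of _ "x + (r - x - y) / 2"]) (auto simp: field_simps)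
  next
    fix x assume "a = ereal x" "b = -\<infinity>"
    then show ?thesis by (intro exI[of _ "x + 1"]) auto
  next
    fix y assume "a = -\<infinity>" "b = ereal y"
    then show ?thesis by (intro exI[of _ "r - y - 1"]) auto
  qed (use assms in auto)
  then show ?thesis using that by force
qed

lemma ereal_less_add_if_diff_less:
  fixes f g :: ereal
  assumes "g \<le> f" "f - g < ereal r1" "g < ereal r2"
  shows "f < ereal (r1 + r2)"
  using assms by (cases f; cases g) auto

lemma joint_liminf_le_diff_add_joint_limsup:
  fixes f g :: "nat \<Rightarrow> 'a::metric_space \<Rightarrow> ereal"
  assumes fg: "\<And>n s. g n s \<le> f n s"
  shows "joint_liminf f s \<le> joint_liminf (\<lambda>n s. f n s - g n s) s + joint_limsup g s"
proof (rule dense_ge)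
  fix y assume y: "joint_liminf (\<lambda>n s. f n s - g n s) s + joint_limsup g s < y"
  show "joint_liminf f s \<le> y"
  proof (cases y)
    case (real r)
    with y obtain r1 r2 where r1: "joint_liminf (\<lambda>n s. f n s - g n s) s < ereal r1"
      and r2: "joint_limsup g s < ereal r2" and r: "r1 + r2 = r"
      by (auto elim: ereal_add_less_realE)
    from r2 obtain n1 \<delta>1
      where "0 < \<delta>1" and g_bound: "(SUP m\<in>{n1..}. SUP s'\<in>ball s \<delta>1. g m s') < ereal r2"
      unfolding joint_limsup_def by (auto simp: INF_less_iff)
    show ?thesis unfolding joint_liminf_def
    proof (intro SUP_least)
      fix n :: nat and \<delta> :: real assume "n \<in> {1..}" "\<delta> \<in> {0<..}"
      with \<open>0 < \<delta>1\<close> have "(INF m\<in>{max n n1..}. INF s'\<in>ball s (min \<delta> \<delta>1). f m s' - g m s')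
          \<le> joint_liminf (\<lambda>n s. f n s - g n s) s"
        unfolding joint_liminf_def
        by (intro SUP_upper2[of "max n n1"] SUP_upper2[of "min \<delta> \<delta>1"]) auto
      also note r1
      finally obtain m s'
        where m: "max n n1 \<le> m" "s' \<in> ball s (min \<delta> \<delta>1)" "f m s' - g m s' < ereal r1"
        by (auto simp: INF_less_iff)
      have "g m s' \<le> (SUP m\<in>{n1..}. SUP s'\<in>ball s \<delta>1. g m s')"
        using m by (intro SUP_upper2[of m] SUP_upper2[of s']) auto
      with g_bound have "f m s' < ereal r"
        using ereal_less_add_if_diff_less[OF fg m(3)] r by auto
      moreover have "(INF m\<in>{n..}. INF s'\<in>ball s \<delta>. f m s') \<le> f m s'"
        using m by (intro INF_lower2[of m] INF_lower2[of s']) auto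
      ultimately show "(INF m\<in>{n..}. INF s'\<in>ball s \<delta>. f m s') \<le> y" using real by simp
    qed
  qed (use y in auto)
qed

lemma liminf_add_le_liminf:
  fixes a b c :: "nat \<Rightarrow> ereal"
  assumes "\<And>n. 0 \<le> a n" and "- \<infinity> < liminf b"
    and "\<forall>\<^sub>F n in sequentially. - \<infinity> < b n \<longrightarrow> a n + b n \<le> c n"
  shows "liminf a + liminf b \<le> liminf c"
proof -
  have "0 \<le> liminf a" using assms(1) by (intro Liminf_bounded always_eventually) auto
  with assms(2) have "liminf a + liminf b \<le> liminf (\<lambda>n. a n + b n)"
    by (intro ereal_liminf_add_mono) auto
  also have "\<dots> \<le> liminf c"
    using less_LiminfD[OF assms(2)] assms(3) by (intro Liminf_mono) (auto elim: eventually_elim2)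
  finally show ?thesis .
qed

theorem corollary2p7:
  fixes \<mu>n :: "nat \<Rightarrow> 'a::metric_space measure" and \<mu> :: "'a measure"
    and f g :: "nat \<Rightarrow> 'a \<Rightarrow> ereal"
  assumes sets_\<mu>n: "\<And>n. sets (\<mu>n n) = sets borel"
    and sets_\<mu>: "sets \<mu> = sets borel"
    and fin: "finite_measure \<mu>"
    and weak: "weak_conv \<mu>n \<mu>"
    and f_meas: "\<And>n. f n \<in> borel_measurable borel"
    and g_meas: "\<And>n. g n \<in> borel_measurable borel"
    and fg: "\<And>n s. f n s \<ge> g n s"
    and def_g_lim: "eint_defined \<mu> (joint_limsup g)"
    and def_g_n: "\<And>n. n \<ge> 1 \<Longrightarrow> eint_defined (\<mu>n n) (g n)"
    and hyp1: "- \<infinity> < eint \<mu> (joint_limsup g)"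
    and hyp2: "eint \<mu> (joint_limsup g) \<le> liminf (\<lambda>n. eint (\<mu>n n) (g n))"
    and def_f_lim: "eint_defined \<mu> (joint_liminf f)"
    and def_f_n: "\<And>n. n \<ge> 1 \<Longrightarrow> eint_defined (\<mu>n n) (f n)"
  shows "eint \<mu> (joint_liminf f) \<le> liminf (\<lambda>n. eint (\<mu>n n) (f n))"
proof -
  define u where "u = (\<lambda>n s. f n s - g n s)"
  have u_nonneg: "0 \<le> u n s" for n s
    unfolding u_def using fg by (simp add: ereal_diff_positive)
  have "eint \<mu> (joint_liminf f) \<le> eint \<mu> (\<lambda>s. joint_liminf u s + joint_limsup g s)"
    unfolding u_def by (intro eint_mono_AE AE_I2 joint_liminf_le_diff_add_joint_limsup fg)
  also have "\<dots> = eint \<mu> (joint_liminf u) + eint \<mu> (joint_limsup g)"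
    using neg_int_less_top[OF def_g_lim hyp1]
      borel_measurable_joint_liminf borel_measurable_joint_limsup
    by (intro eint_add joint_liminf_nonneg u_nonneg)
       (auto simp: measurable_cong_sets[OF sets_\<mu> refl])
  also have "\<dots> \<le> liminf (\<lambda>n. eint (\<mu>n n) (u n)) + liminf (\<lambda>n. eint (\<mu>n n) (g n))"
    by (intro add_mono eint_joint_liminf_le_liminf[OF sets_\<mu> weak u_nonneg] hyp2)
  also have "\<dots> \<le> liminf (\<lambda>n. eint (\<mu>n n) (f n))"
  proof (rule liminf_add_le_liminf)
    show "- \<infinity> < liminf (\<lambda>n. eint (\<mu>n n) (g n))" using hyp1 hyp2 by (rule less_le_trans)
    show "\<forall>\<^sub>F n in sequentially. - \<infinity> < eint (\<mu>n n) (g n) \<longrightarrow>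
        eint (\<mu>n n) (u n) + eint (\<mu>n n) (g n) \<le> eint (\<mu>n n) (f n)"
    proof (intro eventually_mono[OF eventually_ge_at_top[of 1]] impI)
      fix n :: nat assume "1 \<le> n" "- \<infinity> < eint (\<mu>n n) (g n)"
      then have "neg_int (\<mu>n n) (g n) < \<infinity>" by (intro neg_int_less_top def_g_n)
      then have "eint (\<mu>n n) (u n) + eint (\<mu>n n) (g n) = eint (\<mu>n n) (f n)"
        unfolding u_def using fg f_meas g_meas
        by (intro eint_diff_add) (auto simp: measurable_cong_sets[OF sets_\<mu>n refl])
      then show "eint (\<mu>n n) (u n) + eint (\<mu>n n) (g n) \<le> eint (\<mu>n n) (f n)" by simp
    qed
  qed (simp add: eint_nonneg u_nonneg)
  finally show ?thesis .
qed

end
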